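(* Let $a\neq b$ be complex numbers and $d\ge 1$. Then $COS_d\subseteq PCS_d\subseteq MS_d$, where: $PCS_d$ is the set of pairs $(P,Q)\in\mathcal{P}_d\times\mathcal{P}_d$ such that the Abel equation $y'=p(x)y^3+q(x)y^2$, with $p=P'$, $q=Q'$, has a parametric center on $[a,b]$; $MS_d$ is the set of pairs $(P,Q)\in\mathcal{P}_d\times\mathcal{P}_d$ such that $\int_a^b P^i(x)q(x)\,dx=0$ and $\int_a^b Q^i(x)p(x)\,dx=0$ for all integers $i\ge 0$; and $COS_d$ is the set of pairs $(P,Q)\in\mathcal{P}_d\times\mathcal{P}_d$ for which there exist polynomials $\widetilde P,\widetilde Q,W$ with $W(a)=W(b)$ and $P=\widetilde P\circ W$, $Q=\widetilde Q\circ W$.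
   Context: $\mathcal{P}_d$ denotes the complex vector space of polynomials $P\in\mathbb{C}[x]$ of degree at most $d$ with $P(a)=P(b)=0$. For polynomial coefficients $p,q$, the equation $y'=p(x)y^3+\epsilon q(x)y^2$ has a center on $[a,b]$ if every solution with $|y(a)|$ sufficiently small satisfies $y(b)=y(a)$ (the solution being analytically continued along the segment from $a$ to $b$). The equation $y'=p(x)y^3+q(x)y^2$ has a parametric center on $[a,b]$ if for every $\epsilon\in\mathbb{C}$ the equation $y'=p(x)y^3+\epsilon q(x)y^2$ has a center on $[a,b]$. *)

theory Defs
  imports "HOL-Complex_Analysis.Complex_Analysis" "HOL-Computational_Algebra.Polynomial"
begin

definition Pd :: "nat \<Rightarrow> complex \<Rightarrow> complex \<Rightarrow> complex poly set" where
  "Pd d a b = {P. degree P \<le> d \<and> poly P a = 0 \<and> poly P b = 0}"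

text \<open>A solution
analytically continued along the segment x = a + t (b - a), t in [0,1], is
described by Y(t) = y(a + t(b-a)), which satisfies
Y'(t) = (b - a) (p(x) Y^3 + q(x) Y^2).\<close>
definition has_center ::
  "(complex \<Rightarrow> complex) \<Rightarrow> (complex \<Rightarrow> complex) \<Rightarrow> complex \<Rightarrow> complex \<Rightarrow> bool" where
  "has_center p q a b \<longleftrightarrow>
     (\<exists>\<delta>>0. \<forall>Y :: real \<Rightarrow> complex.
        norm (Y 0) < \<delta> \<and>
        (\<forall>t\<in>{0..1}. (Y has_vector_derivative
            ((b - a) * (p (a + of_real t * (b - a)) * (Y t)^3
                      + q (a + of_real t * (b - a)) * (Y t)^2))) (at t within {0..1}))
        \<longrightarrow> Y 1 = Y 0)"

definition PCS :: "nat \<Rightarrow> complex \<Rightarrow> complex \<Rightarrow> (complex poly \<times> complex poly) set" where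
  "PCS d a b = {(P, Q). P \<in> Pd d a b \<and> Q \<in> Pd d a b \<and>
      (\<forall>\<epsilon>::complex. has_center (poly (pderiv P)) (\<lambda>x. \<epsilon> * poly (pderiv Q) x) a b)}"

definition MS :: "nat \<Rightarrow> complex \<Rightarrow> complex \<Rightarrow> (complex poly \<times> complex poly) set" where
  "MS d a b = {(P, Q). P \<in> Pd d a b \<and> Q \<in> Pd d a b \<and>
      (\<forall>i::nat. contour_integral (linepath a b) (\<lambda>x. (poly P x)^i * poly (pderiv Q) x) = 0
              \<and> contour_integral (linepath a b) (\<lambda>x. (poly Q x)^i * poly (pderiv P) x) = 0)}"

definition COS :: "nat \<Rightarrow> complex \<Rightarrow> complex \<Rightarrow> (complex poly \<times> complex poly) set" where
  "COS d a b = {(P, Q). P \<in> Pd d a b \<and> Q \<in> Pd d a b \<and>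
      (\<exists>Pt Qt W :: complex poly. poly W a = poly W b \<and> P = pcompose Pt W \<and> Q = pcompose Qt W)}"

end

theory Submission
  imports Defs "HOL-Computational_Algebra.Formal_Power_Series" "HOL-Computational_Algebra.Polynomial_FPS"
begin

unbundle no vec_syntax

text \<open>
  The solution of \<open>y' = p y\<^sup>3 + q y\<^sup>2\<close>, \<open>y(a) = c\<close>, is expanded as a power series
  \<open>y = \<Sum> Y\<^sub>n(x) c\<^sup>n\<close> with polynomial coefficients; a majorant series shows that it converges on
  \<open>[a, b]\<close> for small \<open>c\<close>, so the equation has a center iff \<open>Y\<^sub>n(b) = 0\<close> for all \<open>n \<ge> 2\<close>.

  If \<open>P = P\<^sub>0 \<circ> W\<close> and \<open>Q = Q\<^sub>0 \<circ> W\<close>, the coefficients are those of the equation for \<open>P\<^sub>0, Q\<^sub>0\<close>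
  composed with \<open>W\<close>; they vanish at \<open>b\<close> because \<open>W(a) = W(b)\<close>.

  For a parametric center the coefficients \<open>Y\<^sub>n(b)\<close>, polynomials in the parameter, vanish
  identically, hence so does their derivative at parameter \<open>0\<close>, the first variation. Perturbing
  \<open>y' = P' y\<^sup>3\<close> by \<open>\<epsilon> Q' y\<^sup>2\<close>, and \<open>y' = Q' y\<^sup>2\<close> by \<open>\<epsilon> P' y\<^sup>3\<close> (reached by rescaling \<open>y\<close>), the
  unperturbed solutions are \<open>c / sqrt (1 - 2 P c\<^sup>2)\<close> and \<open>c / (1 - Q c)\<close>, the first variation can
  be integrated explicitly, and its value at \<open>b\<close> is a generating function of the moments
  \<open>\<integral> P\<^sup>i Q'\<close>, resp. \<open>\<integral> Q\<^sup>i P'\<close>.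
\<close>

section \<open>Formal solutions of Abel equations\<close>

lemma fps_mult_nth_cong:
  fixes f g h k :: "'a::comm_ring_1 fps"
  assumes "f $ 0 = 0" "g $ 0 = 0" "h $ 0 = 0" "k $ 0 = 0"
    and "\<And>i. i < n \<Longrightarrow> f $ i = g $ i" "\<And>i. i < n \<Longrightarrow> h $ i = k $ i"
  shows "(f * h) $ n = (g * k) $ n"
  unfolding fps_mult_nth
proof (rule sum.cong[OF refl])
  fix i assume "i \<in> {0..n}"
  then show "f $ i * h $ (n - i) = g $ i * k $ (n - i)"
    using assms by (cases "i = 0 \<or> i = n") auto
qed

lemma fps_square_nth_cong:
  fixes f g :: "'a::comm_ring_1 fps"
  assumes "f $ 0 = 0" "g $ 0 = 0" "\<And>i. i < n \<Longrightarrow> f $ i = g $ i"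
  shows "(f * f) $ n = (g * g) $ n"
  using assms by (intro fps_mult_nth_cong)

lemma fps_cube_nth_cong:
  fixes f g :: "'a::comm_ring_1 fps"
  assumes "f $ 0 = 0" "g $ 0 = 0" "\<And>i. i < n \<Longrightarrow> f $ i = g $ i"
  shows "(f * f * f) $ n = (g * g * g) $ n"
  using assms by (intro fps_mult_nth_cong fps_square_nth_cong) auto

text \<open>The formal solution \<open>y = \<Sum> Y\<^sub>n c\<^sup>n\<close> of \<open>y' = A y\<^sup>3 + B y\<^sup>2\<close> with initial value \<open>c\<close>:
  \<open>Y\<^sub>0 = 0\<close>, \<open>Y\<^sub>1 = 1\<close> and \<open>Y\<^sub>n = I (A (Y\<^sup>3)\<^sub>n + B (Y\<^sup>2)\<^sub>n)\<close> for \<open>n \<ge> 2\<close>, where the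
  integration operator \<open>I\<close> is kept abstract; the right-hand side only involves \<open>Y\<^sub>i\<close>, \<open>i < n\<close>.\<close>
function abel_coeff :: "('a::comm_ring_1 \<Rightarrow> 'a) \<Rightarrow> 'a \<Rightarrow> 'a \<Rightarrow> nat \<Rightarrow> 'a" where
  "abel_coeff I A B n =
     (if n = 0 then 0 else if n = 1 then 1 else
        let T = Abs_fps (\<lambda>i. if i < n then abel_coeff I A B i else 0)
        in I (A * (T * T * T) $ n + B * (T * T) $ n))"
  by pat_completeness auto
termination by (relation "Wellfounded.measure (\<lambda>(I, A, B, n). n)") auto

declare abel_coeff.simps [simp del]

definition abel_series :: "('a::comm_ring_1 \<Rightarrow> 'a) \<Rightarrow> 'a \<Rightarrow> 'a \<Rightarrow> 'a fps" where
  "abel_series I A B = Abs_fps (abel_coeff I A B)"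

lemma abel_series_nth_0 [simp]: "abel_series I A B $ 0 = 0"
  by (simp add: abel_series_def abel_coeff.simps)

lemma abel_series_nth_1 [simp]: "abel_series I A B $ Suc 0 = 1"
  by (simp add: abel_series_def abel_coeff.simps[of _ _ _ "Suc 0"])

lemma abel_series_nth:
  assumes "n \<ge> 2"
  shows "abel_series I A B $ n =
    I (A * (abel_series I A B * abel_series I A B * abel_series I A B) $ n
       + B * (abel_series I A B * abel_series I A B) $ n)"
proof -
  let ?Y = "abel_series I A B"
  let ?T = "Abs_fps (\<lambda>i. if i < n then abel_coeff I A B i else 0)"
  have T0: "?T $ 0 = 0" using assms by (simp add: abel_coeff.simps)
  have T: "\<And>i. i < n \<Longrightarrow> ?T $ i = ?Y $ i" by (simp add: abel_series_def)
  have "?Y $ n = I (A * (?T * ?T * ?T) $ n + B * (?T * ?T) $ n)"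
    using assms by (simp add: abel_series_def abel_coeff.simps[of I A B n] Let_def)
  also have "(?T * ?T * ?T) $ n = (?Y * ?Y * ?Y) $ n"
    by (rule fps_cube_nth_cong[OF T0 _ T]) simp
  also have "(?T * ?T) $ n = (?Y * ?Y) $ n"
    by (rule fps_square_nth_cong[OF T0 _ T]) simp
  finally show ?thesis .
qed

lemma abel_series_unique:
  assumes F0: "F $ 0 = 0" and F1: "F $ 1 = 1"
    and F: "\<And>n. n \<ge> 2 \<Longrightarrow> F $ n = I (A * (F * F * F) $ n + B * (F * F) $ n)"
  shows "F = abel_series I A B"
proof -
  let ?Y = "abel_series I A B"
  have "\<forall>m<n. F $ m = ?Y $ m" for n
  proof (induction n)
    case (Suc n)
    have "F $ n = ?Y $ n"
    proof (cases "n \<ge> 2")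
      case True
      have "(F * F * F) $ n = (?Y * ?Y * ?Y) $ n" "(F * F) $ n = (?Y * ?Y) $ n"
        using F0 Suc.IH by (auto intro!: fps_cube_nth_cong fps_square_nth_cong)
      then show ?thesis by (simp only: F[OF True] abel_series_nth[OF True])
    next
      case False
      then have "n = 0 \<or> n = 1" by auto
      then show ?thesis using F0 F1 by auto
    qed
    then show ?case using Suc.IH by (auto simp: less_Suc_eq)
  qed simp
  then show ?thesis by (intro fps_ext) blast
qed

definition fps_map :: "('a \<Rightarrow> 'b) \<Rightarrow> 'a fps \<Rightarrow> 'b fps" where
  "fps_map h F = Abs_fps (\<lambda>n. h (F $ n))"

lemma fps_map_nth [simp]: "fps_map h F $ n = h (F $ n)"
  by (simp add: fps_map_def)

lemma fps_map_add:
  assumes "\<And>x y. h (x + y) = h x + h y"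
  shows "fps_map h (f + g) = fps_map h f + fps_map h g"
  by (rule fps_ext) (simp add: assms)

lemma fps_map_mult:
  fixes h :: "'a::comm_ring_1 \<Rightarrow> 'b::comm_ring_1"
  assumes "h 0 = 0" "\<And>x y. h (x + y) = h x + h y" "\<And>x y. h (x * y) = h x * h y"
  shows "fps_map h (f * g) = fps_map h f * fps_map h g"
proof (rule fps_ext)
  fix n
  have "h ((f * g) $ n) = (\<Sum>i=0..n. h (f $ i * g $ (n - i)))"
    unfolding fps_mult_nth using assms(1,2) by (rule sum_comp_morphism[symmetric, unfolded o_def])
  then show "fps_map h (f * g) $ n = (fps_map h f * fps_map h g) $ n"
    by (simp add: fps_mult_nth assms(3))
qed

lemma abel_series_map:
  fixes h :: "'a::comm_ring_1 \<Rightarrow> 'b::comm_ring_1"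
  assumes h0: "h 0 = 0" and h1: "h 1 = 1" and hadd: "\<And>x y. h (x + y) = h x + h y"
    and hmult: "\<And>x y. h (x * y) = h x * h y" and hI: "\<And>x. h (I x) = J (h x)"
  shows "fps_map h (abel_series I A B) = abel_series J (h A) (h B)"
proof (rule abel_series_unique)
  let ?Y = "abel_series I A B" and ?H = "fps_map h (abel_series I A B)"
  have hmap: "fps_map h (f * g) = fps_map h f * fps_map h g" for f g
    by (rule fps_map_mult[OF h0 hadd hmult])
  have hY: "h ((?Y * ?Y * ?Y) $ n) = (?H * ?H * ?H) $ n" "h ((?Y * ?Y) $ n) = (?H * ?H) $ n" for n
    by (metis fps_map_nth hmap)+
  show "?H $ 0 = 0" "?H $ 1 = 1" using h0 h1 by simp_all
  fix n :: nat assume "n \<ge> 2"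
  then show "?H $ n = J (h A * (?H * ?H * ?H) $ n + h B * (?H * ?H) $ n)"
    by (simp add: abel_series_nth hI hadd hmult hY)
qed

lemma abel_series_deriv:
  assumes "\<And>x. d (I x) = x" and "d 0 = 0" and "d 1 = 0"
  shows "d (abel_series I A B $ n) =
    A * (abel_series I A B * abel_series I A B * abel_series I A B) $ n
    + B * (abel_series I A B * abel_series I A B) $ n"
proof (cases "n \<ge> 2")
  case True
  then show ?thesis by (simp only: abel_series_nth[OF True] assms(1))
next
  case False
  then have "n = 0 \<or> n = 1" by auto
  then show ?thesis using assms(2,3) by (auto simp: fps_mult_nth_1)
qed

section \<open>Primitives of polynomials and series of polynomials\<close>

lemma pderiv_sum: "pderiv (sum f S) = (\<Sum>x\<in>S. pderiv (f x))"
  using sum_comp_morphism[of pderiv f S] by (simp add: pderiv_add o_def)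

lemma pderiv_surj: "\<exists>G. pderiv G = (F :: 'a::field_char_0 poly)"
proof
  have "pderiv (\<Sum>i\<le>degree F. monom (coeff F i / of_nat (Suc i)) (Suc i))
      = (\<Sum>i\<le>degree F. monom (coeff F i) i)"
    unfolding pderiv_sum pderiv_monom by (intro sum.cong refl) (simp del: of_nat_Suc)
  also have "\<dots> = F" by (rule poly_as_sum_of_monoms)
  finally show "pderiv (\<Sum>i\<le>degree F. monom (coeff F i / of_nat (Suc i)) (Suc i)) = F" .
qed

definition pprimitive :: "'a \<Rightarrow> 'a poly \<Rightarrow> 'a::field_char_0 poly" where
  "pprimitive a F = (SOME G. pderiv G = F \<and> poly G a = 0)"

lemma pprimitive_spec:
  fixes F :: "'a::field_char_0 poly"
  shows "pderiv (pprimitive a F) = F \<and> poly (pprimitive a F) a = 0"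
proof -
  obtain G where "pderiv G = F" using pderiv_surj by blast
  then have "pderiv (G - [:poly G a:]) = F \<and> poly (G - [:poly G a:]) a = 0"
    by (simp add: pderiv_diff)
  then show ?thesis unfolding pprimitive_def by (rule someI)
qed

lemma pderiv_pprimitive [simp]: "pderiv (pprimitive a F) = F"
  and poly_pprimitive_self [simp]: "poly (pprimitive a F) a = 0"
  using pprimitive_spec by blast+

lemma pprimitive_unique:
  fixes G :: "'a::field_char_0 poly"
  assumes "pderiv G = F" "poly G a = 0"
  shows "pprimitive a F = G"
proof -
  have "pderiv (G - pprimitive a F) = 0" using assms by (simp add: pderiv_diff)
  then obtain c where c: "G - pprimitive a F = [:c:]"
    by (metis pderiv_eq_0_iff degree_eq_zeroE)
  then have "poly (G - pprimitive a F) a = c" by simp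
  then have "c = 0" using assms by simp
  then show ?thesis using c by simp
qed

lemma pprimitive_0 [simp]: "pprimitive a 0 = 0"
  by (rule pprimitive_unique) auto

lemma pprimitive_add: "pprimitive a (F + G) = pprimitive a F + pprimitive a G"
  by (rule pprimitive_unique) (auto simp: pderiv_add)

lemma pprimitive_smult: "pprimitive a (smult c F) = smult c (pprimitive a F)"
  by (rule pprimitive_unique) (auto simp: pderiv_smult)

lemma contour_integral_linepath_poly:
  assumes "pderiv G = F"
  shows "contour_integral (linepath a b) (poly F) = poly G b - poly G a"
proof -
  have "(poly F has_contour_integral poly G (pathfinish (linepath a b)) - poly G (pathstart (linepath a b)))
      (linepath a b)"
    by (rule contour_integral_primitive[where S = UNIV]) (auto simp: assms[symmetric] intro: poly_DERIV)
  then show ?thesis by (auto intro: contour_integral_unique)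
qed

definition fps_pderiv :: "'a::idom poly fps \<Rightarrow> 'a poly fps" where
  "fps_pderiv F = fps_map pderiv F"

definition fps_eval :: "'a \<Rightarrow> 'a::comm_semiring_0 poly fps \<Rightarrow> 'a fps" where
  "fps_eval z F = fps_map (\<lambda>p. poly p z) F"

lemma fps_pderiv_nth [simp]: "fps_pderiv F $ n = pderiv (F $ n)"
  by (simp add: fps_pderiv_def)

lemma fps_pderiv_add [simp]: "fps_pderiv (f + g) = fps_pderiv f + fps_pderiv g"
  by (rule fps_ext) (simp add: pderiv_add)

lemma fps_pderiv_diff [simp]:
  fixes f g :: "'a::idom poly fps"
  shows "fps_pderiv (f - g) = fps_pderiv f - fps_pderiv g"
  by (rule fps_ext) (simp add: pderiv_diff)

lemma fps_pderiv_mult [simp]: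
  fixes f g :: "'a::idom poly fps"
  shows "fps_pderiv (f * g) = fps_pderiv f * g + f * fps_pderiv g"
proof (rule fps_ext)
  fix n
  have "fps_pderiv (f * g) $ n = (\<Sum>i=0..n. pderiv (f $ i) * g $ (n - i) + f $ i * pderiv (g $ (n - i)))"
    by (simp add: fps_mult_nth pderiv_sum pderiv_mult mult.commute add.commute)
  then show "fps_pderiv (f * g) $ n = (fps_pderiv f * g + f * fps_pderiv g) $ n"
    by (simp add: fps_mult_nth sum.distrib)
qed

lemma fps_pderiv_const [simp]: "fps_pderiv (fps_const c) = fps_const (pderiv c)"
  by (rule fps_ext) simp

lemma fps_pderiv_X [simp]: "fps_pderiv fps_X = 0"
  by (rule fps_ext) (simp add: fps_X_nth)

lemma fps_pderiv_one [simp]: "fps_pderiv 1 = 0"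
  by (rule fps_ext) (simp add: fps_one_nth)

lemma fps_pderiv_numeral [simp]: "fps_pderiv (numeral k) = 0"
  by (rule fps_ext) (simp add: fps_numeral_nth pderiv_numeral)

lemma fps_eval_nth [simp]: "fps_eval z F $ n = poly (F $ n) z"
  by (simp add: fps_eval_def)

lemma fps_eval_mult [simp]:
  fixes f g :: "'a::comm_ring_1 poly fps"
  shows "fps_eval z (f * g) = fps_eval z f * fps_eval z g"
  unfolding fps_eval_def by (rule fps_map_mult) auto

lemma fps_eval_add [simp]: "fps_eval z (f + g) = fps_eval z f + fps_eval z g"
  by (rule fps_ext) simp

lemma fps_eval_diff [simp]:
  fixes f g :: "'a::comm_ring_1 poly fps"
  shows "fps_eval z (f - g) = fps_eval z f - fps_eval z g"
  by (rule fps_ext) simp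

lemma fps_eval_const [simp]: "fps_eval z (fps_const c) = fps_const (poly c z)"
  by (rule fps_ext) simp

lemma fps_eval_X [simp]: "fps_eval z fps_X = fps_X"
  by (rule fps_ext) (simp add: fps_X_nth)

lemma fps_eval_one [simp]: "fps_eval z 1 = 1"
  by (rule fps_ext) (simp add: fps_one_nth)

lemma fps_pderiv_eq_mult_imp_0:
  fixes K G :: "'a::field_char_0 poly fps"
  assumes K: "fps_pderiv K = G * K" and G0: "G $ 0 = 0" and Ka: "fps_eval a K = 0"
  shows "K = 0"
proof -
  have "\<forall>m<n. K $ m = 0" for n
  proof (induction n)
    case (Suc n)
    have "pderiv (K $ n) = (G * K) $ n" by (metis K fps_pderiv_nth)
    also have "\<dots> = 0"
      unfolding fps_mult_nth
    proof (intro sum.neutral ballI)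
      fix i assume "i \<in> {0..n}"
      then show "G $ i * K $ (n - i) = 0" using Suc.IH G0 by (cases "i = 0") auto
    qed
    finally have "pprimitive a 0 = K $ n"
      using Ka by (intro pprimitive_unique) (auto dest: arg_cong[where f = "\<lambda>F. F $ n"])
    then show ?case using Suc.IH by (auto simp: less_Suc_eq)
  qed simp
  then show ?thesis by (intro fps_ext) auto
qed

lemma contour_integral_linepath_fps_nth:
  assumes "fps_pderiv R = F" and "fps_eval a R = 0"
  shows "contour_integral (linepath a b) (poly (F $ n)) = poly (R $ n) b"
proof -
  have "pderiv (R $ n) = F $ n" by (metis assms(1) fps_pderiv_nth)
  moreover have "poly (R $ n) a = 0" by (metis assms(2) fps_eval_nth fps_zero_nth)
  ultimately show ?thesis by (simp add: contour_integral_linepath_poly)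
qed


section \<open>Abel series with polynomial coefficients\<close>

lemma fps_pderiv_abel_series:
  "fps_pderiv (abel_series (pprimitive a) A B) =
    fps_const A * (abel_series (pprimitive a) A B * abel_series (pprimitive a) A B * abel_series (pprimitive a) A B)
    + fps_const B * (abel_series (pprimitive a) A B * abel_series (pprimitive a) A B)"
  by (rule fps_ext) (simp add: abel_series_deriv[where d = pderiv])

lemma fps_eval_abel_series_start [simp]: "fps_eval a (abel_series (pprimitive a) A B) = fps_X"
proof (rule fps_ext)
  fix n
  show "fps_eval a (abel_series (pprimitive a) A B) $ n = fps_X $ n"
  proof (cases "n \<ge> 2")
    case True
    then show ?thesis by (simp add: abel_series_nth fps_X_nth)
  next
    case False
    then have "n = 0 \<or> n = 1" by auto
    then show ?thesis by (auto simp: fps_X_nth)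
  qed
qed

text \<open>The substitution \<open>x = W(t)\<close> turns \<open>y' = A(x) y\<^sup>3 + B(x) y\<^sup>2\<close> into
  \<open>y' = W'(t) (A(W(t)) y\<^sup>3 + B(W(t)) y\<^sup>2)\<close>.\<close>
lemma abel_series_pcompose:
  fixes A B W :: "'a::field_char_0 poly"
  shows "fps_map (\<lambda>f. pcompose f W) (abel_series (pprimitive (poly W a)) A B)
       = abel_series (pprimitive a) (pcompose A W * pderiv W) (pcompose B W * pderiv W)"
proof (rule abel_series_unique)
  let ?Z = "abel_series (pprimitive (poly W a)) A B"
  let ?H = "fps_map (\<lambda>f. pcompose f W) ?Z"
  have hmap: "fps_map (\<lambda>f. pcompose f W) (f * g) = fps_map (\<lambda>f. pcompose f W) f * fps_map (\<lambda>f. pcompose f W) g"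
    for f g by (rule fps_map_mult) (auto simp: pcompose_add pcompose_mult)
  have H: "pcompose ((?Z * ?Z * ?Z) $ n) W = (?H * ?H * ?H) $ n" "pcompose ((?Z * ?Z) $ n) W = (?H * ?H) $ n"
    for n by (metis fps_map_nth hmap)+
  show "?H $ 0 = 0" "?H $ 1 = 1" by (simp_all add: pcompose_1)
  fix n :: nat assume n: "n \<ge> 2"
  define F where "F = A * (?Z * ?Z * ?Z) $ n + B * (?Z * ?Z) $ n"
  have "?H $ n = pcompose (pprimitive (poly W a) F) W"
    unfolding F_def by (simp add: abel_series_nth[OF n])
  also have "\<dots> = pprimitive a (pcompose A W * pderiv W * (?H * ?H * ?H) $ n
                                + pcompose B W * pderiv W * (?H * ?H) $ n)"
  proof (rule pprimitive_unique[symmetric])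
    have "pderiv (pcompose (pprimitive (poly W a) F) W) = pcompose F W * pderiv W"
      by (simp add: pderiv_pcompose)
    also have "pcompose F W = pcompose A W * (?H * ?H * ?H) $ n + pcompose B W * (?H * ?H) $ n"
      unfolding F_def by (simp only: pcompose_add pcompose_mult H)
    finally show "pderiv (pcompose (pprimitive (poly W a) F) W) =
        pcompose A W * pderiv W * (?H * ?H * ?H) $ n + pcompose B W * pderiv W * (?H * ?H) $ n"
      by (simp add: algebra_simps)
    show "poly (pcompose (pprimitive (poly W a) F) W) a = 0" by (simp add: poly_pcompose)
  qed
  finally show "?H $ n = pprimitive a (pcompose A W * pderiv W * (?H * ?H * ?H) $ n
                                + pcompose B W * pderiv W * (?H * ?H) $ n)" .
qed

lemma abel_series_pcompose_vanish:
  fixes A B W :: "'a::field_char_0 poly"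
  assumes "poly W a = poly W b" and "n \<ge> 2"
  shows "poly (abel_series (pprimitive a) (pcompose A W * pderiv W) (pcompose B W * pderiv W) $ n) b = 0"
  using assms
  by (simp flip: abel_series_pcompose add: poly_pcompose abel_series_nth)

section \<open>First variation and moments\<close>

lemma poly_eq_0_of_infinite_roots:
  fixes G :: "'a::idom poly"
  assumes "infinite S" "\<And>e. e \<in> S \<Longrightarrow> poly G e = 0"
  shows "G = 0"
  using assms poly_roots_finite finite_subset[of S "{x. poly G x = 0}"] by blast

lemma poly_map_poly_pprimitive:
  fixes k :: "'a::field_char_0 poly poly"
  shows "poly (map_poly (pprimitive a) k) [:e:] = pprimitive a (poly k [:e:])"
  by (induction k) (simp_all add: map_poly_pCons pprimitive_add pprimitive_smult)

lemma poly_poly_const_swap: "poly (poly k [:e:]) b = poly (map_poly (\<lambda>f. poly f b) k) e"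
  by (induction k) (simp_all add: map_poly_pCons)

lemma fps_map_coeff_1_mult:
  fixes f g :: "'a::comm_ring_1 poly fps"
  shows "fps_map (\<lambda>k. coeff k 1) (f * g) = fps_map (\<lambda>k. coeff k 0) f * fps_map (\<lambda>k. coeff k 1) g
          + fps_map (\<lambda>k. coeff k 1) f * fps_map (\<lambda>k. coeff k 0) g"
  by (rule fps_ext) (simp add: fps_mult_nth coeff_sum coeff_mult sum.distrib)

lemma fps_map_coeff_0_mult:
  fixes f g :: "'a::comm_ring_1 poly fps"
  shows "fps_map (\<lambda>k. coeff k 0) (f * g) = fps_map (\<lambda>k. coeff k 0) f * fps_map (\<lambda>k. coeff k 0) g"
  by (rule fps_map_mult) (auto simp: coeff_mult_0)

lemma fps_map_coeff_const: "fps_map (\<lambda>k. coeff k i) (fps_const c) = fps_const (coeff c i)"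
  by (rule fps_ext) simp

text \<open>The Abel series of \<open>y' = (A\<^sub>0 + \<epsilon> A\<^sub>1) y\<^sup>3 + (B\<^sub>0 + \<epsilon> B\<^sub>1) y\<^sup>2\<close> as a series whose
  coefficients are polynomials in \<open>\<epsilon>\<close> (with polynomial coefficients in \<open>x\<close>); its parts of order
  0 and 1 in \<open>\<epsilon>\<close> are the unperturbed series and its first variation.\<close>
locale abel_variation =
  fixes a :: "'a::field_char_0" and A0 A1 B0 B1 :: "'a poly"
begin

definition "abel_family = abel_series (map_poly (pprimitive a)) [:A0, A1:] [:B0, B1:]"
definition "base = fps_map (\<lambda>k. coeff k 0) abel_family"
definition "variation = fps_map (\<lambda>k. coeff k 1) abel_family"

lemma abel_family_at:
  "fps_map (\<lambda>f. poly f [:e:]) abel_family = abel_series (pprimitive a) (A0 + smult e A1) (B0 + smult e B1)"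
  unfolding abel_family_def by (subst abel_series_map[where J = "pprimitive a"]) (auto simp: poly_map_poly_pprimitive)

lemma base_eq: "base = abel_series (pprimitive a) A0 B0"
  unfolding base_def abel_family_def
  by (subst abel_series_map[where J = "pprimitive a"]) (auto simp: coeff_mult_0 coeff_map_poly)

lemma abel_family_deriv:
  "map_poly pderiv (abel_family $ n) =
    [:A0, A1:] * (abel_family * abel_family * abel_family) $ n + [:B0, B1:] * (abel_family * abel_family) $ n"
  unfolding abel_family_def by (rule abel_series_deriv) (auto simp: map_poly_map_poly o_def one_pCons map_poly_pCons)

lemma fps_pderiv_variation:
  "fps_pderiv variation =
    fps_const A1 * (base * base * base) + fps_const A0 * (3 * (base * base * variation))
    + fps_const B1 * (base * base) + fps_const B0 * (2 * (base * variation))"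
proof (rule fps_ext)
  let ?Y = abel_family
  fix n
  have "fps_pderiv variation $ n = coeff (map_poly pderiv (?Y $ n)) 1"
    by (simp add: variation_def coeff_map_poly)
  also have "\<dots> = fps_map (\<lambda>k. coeff k 1) (fps_const [:A0, A1:] * (?Y * ?Y * ?Y) + fps_const [:B0, B1:] * (?Y * ?Y)) $ n"
    by (simp add: abel_family_deriv)
  also have "fps_map (\<lambda>k. coeff k 1) (fps_const [:A0, A1:] * (?Y * ?Y * ?Y) + fps_const [:B0, B1:] * (?Y * ?Y)) =
    fps_const A1 * (base * base * base) + fps_const A0 * (3 * (base * base * variation))
    + fps_const B1 * (base * base) + fps_const B0 * (2 * (base * variation))"
    unfolding fps_map_add[of "\<lambda>k. coeff k 1", OF coeff_add] fps_map_coeff_1_mult fps_map_coeff_0_mult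
      fps_map_coeff_const base_def[symmetric] variation_def[symmetric]
    by (simp add: algebra_simps numeral_eq_Suc)
  finally show "fps_pderiv variation $ n = (fps_const A1 * (base * base * base) + fps_const A0 * (3 * (base * base * variation))
    + fps_const B1 * (base * base) + fps_const B0 * (2 * (base * variation))) $ n" .
qed

lemma fps_eval_variation_start [simp]: "fps_eval a variation = 0"
proof (rule fps_ext)
  fix n
  show "fps_eval a variation $ n = 0 $ n"
  proof (cases "n \<ge> 2")
    case True
    then show ?thesis by (simp add: variation_def abel_family_def abel_series_nth coeff_map_poly)
  next
    case False
    then have "n = 0 \<or> n = 1" by auto
    then show ?thesis by (auto simp: variation_def abel_family_def)
  qed
qed

lemma fps_eval_variation_end:
  assumes "infinite S"
    and "\<And>e n. e \<in> S \<Longrightarrow> n \<ge> 2 \<Longrightarrow> poly (abel_series (pprimitive a) (A0 + smult e A1) (B0 + smult e B1) $ n) b = 0"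
  shows "fps_eval b variation = 0"
proof (rule fps_ext)
  fix n
  show "fps_eval b variation $ n = 0 $ n"
  proof (cases "n \<ge> 2")
    case True
    have "map_poly (\<lambda>f. poly f b) (abel_family $ n) = 0"
    proof (rule poly_eq_0_of_infinite_roots[OF assms(1)])
      fix e assume "e \<in> S"
      have "poly (map_poly (\<lambda>f. poly f b) (abel_family $ n)) e = poly (poly (abel_family $ n) [:e:]) b"
        by (simp add: poly_poly_const_swap)
      also have "poly (abel_family $ n) [:e:] = abel_series (pprimitive a) (A0 + smult e A1) (B0 + smult e B1) $ n"
        by (metis abel_family_at fps_map_nth)
      finally show "poly (map_poly (\<lambda>f. poly f b) (abel_family $ n)) e = 0"
        using assms(2)[OF \<open>e \<in> S\<close> True] by simp
    qed
    then have "coeff (map_poly (\<lambda>f. poly f b) (abel_family $ n)) 1 = 0" by simp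
    then show ?thesis by (simp add: variation_def coeff_map_poly)
  next
    case False
    then have "n = 0 \<or> n = 1" by auto
    then show ?thesis by (auto simp: variation_def abel_family_def)
  qed
qed

end


lemma contour_integral_linepath_poly_smult:
  "contour_integral (linepath a b) (poly (smult c F)) = c * contour_integral (linepath a b) (poly F)"
proof -
  have "contour_integral (linepath a b) (poly (smult c F)) =
      poly (smult c (pprimitive a F)) b - poly (smult c (pprimitive a F)) a"
    by (rule contour_integral_linepath_poly) (simp add: pderiv_smult)
  moreover have "contour_integral (linepath a b) (poly F) = poly (pprimitive a F) b - poly (pprimitive a F) a"
    by (rule contour_integral_linepath_poly) simp
  ultimately show ?thesis by (simp add: algebra_simps)
qed

lemma abel_series_quadratic:
  fixes Q :: "'a::field_char_0 poly"
  assumes "poly Q a = 0"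
  shows "abel_series (pprimitive a) 0 (pderiv Q) * (1 - fps_X * fps_const Q) = fps_X"
proof -
  let ?Y = "abel_series (pprimitive a) 0 (pderiv Q)"
  define K where "K = ?Y * (1 - fps_X * fps_const Q) - fps_X"
  have "fps_pderiv K = (fps_const (pderiv Q) * ?Y) * K"
    unfolding K_def by (simp add: fps_pderiv_abel_series algebra_simps)
  moreover have "(fps_const (pderiv Q) * ?Y) $ 0 = 0" by simp
  moreover have "fps_eval a K = 0" using assms by (simp add: K_def)
  ultimately have "K = 0" by (rule fps_pderiv_eq_mult_imp_0)
  then show ?thesis by (simp add: K_def)
qed

lemma abel_series_quadratic_nth:
  fixes Q :: "'a::field_char_0 poly"
  assumes "poly Q a = 0"
  shows "abel_series (pprimitive a) 0 (pderiv Q) $ Suc m = Q ^ m"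
proof (induction m)
  let ?Y = "abel_series (pprimitive a) 0 (pderiv Q)"
  have Y: "?Y * (1 - fps_X * fps_const Q) = ?Y - fps_X * (?Y * fps_const Q)"
    by (simp add: algebra_simps)
  {
    case 0
    show ?case by simp
  next
    case (Suc m)
    have "0 = (?Y * (1 - fps_X * fps_const Q)) $ Suc (Suc m)"
      by (simp add: abel_series_quadratic[OF assms] fps_X_nth)
    also have "\<dots> = ?Y $ Suc (Suc m) - Q * ?Y $ Suc m"
      by (simp only: Y) (simp add: fps_X_mult_nth mult.commute)
    finally show ?case using Suc by simp
  }
qed

text \<open>The expansion \<open>\<Sum>\<^sub>m (1/2 choose m) (-2 P)\<^sup>m y\<^sup>2\<^sup>m\<close> of \<open>sqrt (1 - 2 P y\<^sup>2)\<close>.\<close>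
definition sqrt_series :: "'a::field_char_0 poly \<Rightarrow> 'a poly fps" where
  "sqrt_series P = Abs_fps (\<lambda>n. if even n then smult (((1/2) gchoose (n div 2)) * (-2) ^ (n div 2)) (P ^ (n div 2))
                                 else 0)"

lemma sqrt_series_nth_double: "sqrt_series P $ (2 * m) = smult (((1/2) gchoose m) * (-2) ^ m) (P ^ m)"
  by (simp add: sqrt_series_def)

lemma sqrt_series_square_nth_double:
  "(sqrt_series P * sqrt_series P) $ (2 * m) = smult ((1 gchoose m) * (-2) ^ m) (P ^ m)"
proof -
  let ?s = "\<lambda>i. sqrt_series P $ i"
  have "(sqrt_series P * sqrt_series P) $ (2 * m) = (\<Sum>i\<in>(\<lambda>j. 2 * j) ` {0..m}. ?s i * ?s (2 * m - i))"
    unfolding fps_mult_nth by (rule sum.mono_neutral_right) (auto simp: sqrt_series_def elim!: evenE)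
  also have "\<dots> = (\<Sum>j=0..m. ?s (2 * j) * ?s (2 * (m - j)))"
    by (simp add: sum.reindex inj_on_def flip: diff_mult_distrib2)
  also have "\<dots> = (\<Sum>j=0..m. smult (((1/2) gchoose j) * ((1/2) gchoose (m - j)) * (-2) ^ m) (P ^ m))"
  proof (intro sum.cong refl)
    fix j assume "j \<in> {0..m}"
    then have Pm: "P ^ j * P ^ (m - j) = P ^ m" and pow: "(-2) ^ j * (-2) ^ (m - j) = ((-2) ^ m :: 'a)"
      by (simp_all flip: power_add)
    show "?s (2 * j) * ?s (2 * (m - j)) = smult (((1/2) gchoose j) * ((1/2) gchoose (m - j)) * (-2) ^ m) (P ^ m)"
      by (simp only: sqrt_series_nth_double mult_smult_left mult_smult_right smult_smult Pm flip: pow)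
         (simp only: ac_simps)
  qed
  also have "\<dots> = smult ((1 gchoose m) * (-2) ^ m) (P ^ m)"
    using gbinomial_Vandermonde[of "1/2 :: 'a" "1/2" m] by (simp flip: smult_sum sum_distrib_right)
  finally show ?thesis .
qed

lemma sqrt_series_square: "sqrt_series P * sqrt_series P = 1 - 2 * fps_const P * fps_X * fps_X"
proof (rule fps_ext)
  fix n
  have "2 * fps_const P = fps_const (smult 2 P)"
    by (rule fps_ext) (simp add: fps_numeral_nth numeral_mult_conv_smult)
  then have "1 - 2 * fps_const P * fps_X * fps_X = 1 - fps_X * (fps_X * fps_const (smult 2 P))"
    by (metis mult.assoc mult.commute)
  then have rhs: "(1 - 2 * fps_const P * fps_X * fps_X) $ n = (if n = 0 then 1 else if n = 2 then smult (-2) P else 0)"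
    unfolding \<open>1 - _ = _\<close>
    by (auto simp: fps_one_nth fps_X_mult_nth)
  show "(sqrt_series P * sqrt_series P) $ n = (1 - 2 * fps_const P * fps_X * fps_X) $ n"
  proof (cases "even n")
    case False
    then have "(sqrt_series P * sqrt_series P) $ n = 0"
      unfolding fps_mult_nth by (intro sum.neutral) (auto simp: sqrt_series_def)
    moreover have "n \<noteq> 0" "n \<noteq> 2" using False by presburger+
    ultimately show ?thesis unfolding rhs by simp
  next
    case True
    then obtain m where n: "n = 2 * m" by blast
    consider "m = 0" | "m = 1" | "m \<ge> 2" by linarith
    then show ?thesis
    proof cases
      case 1
      then show ?thesis using sqrt_series_square_nth_double[of P 0] unfolding rhs by (simp add: n)
    next
      case 2
      then show ?thesis using sqrt_series_square_nth_double[of P 1] unfolding rhs by (simp add: n)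
    next
      case 3
      then have "(1 :: 'a) gchoose m = 0"
        using binomial_gbinomial[of 1 m, where 'a = 'a] by (simp add: binomial_eq_0)
      then show ?thesis using 3 unfolding rhs by (simp add: n sqrt_series_square_nth_double)
    qed
  qed
qed

lemma sqrt_series_pderiv: "sqrt_series P * fps_pderiv (sqrt_series P) = - (fps_const (pderiv P) * fps_X * fps_X)"
proof -
  have "2 * (sqrt_series P * fps_pderiv (sqrt_series P)) = fps_pderiv (sqrt_series P * sqrt_series P)"
    by (simp only: fps_pderiv_mult mult_2 mult.commute[of "fps_pderiv (sqrt_series P)" "sqrt_series P"])
  also have "\<dots> = 2 * (- (fps_const (pderiv P) * fps_X * fps_X))"
    by (simp add: sqrt_series_square algebra_simps)
  finally show ?thesis by (metis mult_cancel_left zero_neq_numeral)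
qed

text \<open>The solution of \<open>y' = P'(x) y\<^sup>3\<close>, \<open>y(a) = c\<close>, is \<open>c / sqrt (1 - 2 P(x) c\<^sup>2)\<close>: by uniqueness
  \<open>y\<^sup>2 (1 - 2 P c\<^sup>2) = c\<^sup>2\<close>, and the sign is fixed by the linear coefficient.\<close>
lemma abel_series_cubic:
  fixes P :: "'a::field_char_0 poly"
  assumes "poly P a = 0"
  shows "abel_series (pprimitive a) (pderiv P) 0 * sqrt_series P = fps_X"
proof -
  let ?Y = "abel_series (pprimitive a) (pderiv P) 0"
  define K where "K = ?Y * ?Y * (1 - 2 * fps_const P * fps_X * fps_X) - fps_X * fps_X"
  have "fps_pderiv K = (2 * fps_const (pderiv P) * ?Y * ?Y) * K"
    unfolding K_def by (simp add: fps_pderiv_abel_series algebra_simps)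
  moreover have "(2 * fps_const (pderiv P) * ?Y * ?Y) $ 0 = 0" by simp
  moreover have "fps_eval a K = 0" using assms by (simp add: K_def)
  ultimately have "K = 0" by (rule fps_pderiv_eq_mult_imp_0)
  have "(?Y * sqrt_series P - fps_X) * (?Y * sqrt_series P + fps_X) = ?Y * ?Y * (sqrt_series P * sqrt_series P) - fps_X * fps_X"
    by (simp add: algebra_simps)
  also have "\<dots> = 0"
    using \<open>K = 0\<close> by (simp only: K_def sqrt_series_square)
  finally have "(?Y * sqrt_series P - fps_X) * (?Y * sqrt_series P + fps_X) = 0" .
  moreover have "(?Y * sqrt_series P + fps_X) $ 1 = 2"
    by (simp add: sqrt_series_def fps_mult_nth_1 fps_X_nth)
  then have "?Y * sqrt_series P + fps_X \<noteq> 0" by (metis fps_zero_nth zero_neq_numeral)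
  ultimately show ?thesis by simp
qed

lemma gbinomial_half_neq_0: "((1/2 :: 'a::field_char_0) gchoose k) \<noteq> 0"
proof
  assume "(1/2 :: 'a) gchoose k = 0"
  then obtain j where "- (1/2 :: 'a) = - of_nat j"
    by (auto simp: gbinomial_pochhammer pochhammer_eq_0_iff)
  then have "of_nat (2 * j) = (of_nat 1 :: 'a)" by (simp add: field_simps)
  then have "2 * j = 1" by (simp only: of_nat_eq_iff)
  then show False by presburger
qed

text \<open>With \<open>y = c / (1 - Q c)\<close>, the first variation satisfies \<open>v' = P' y\<^sup>3 + 2 Q' y v\<close>, so
  \<open>(v (1 - Q c)\<^sup>2)' = P' y c\<^sup>2\<close>, whose coefficient of \<open>c\<^sup>k\<^sup>+\<^sup>3\<close> is \<open>Q\<^sup>k P'\<close>.\<close>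
lemma moments_vanish_cubic_perturbation:
  fixes P Q :: "complex poly"
  assumes Qa: "poly Q a = 0"
    and "fps_eval b (abel_variation.variation a 0 (pderiv P) (pderiv Q) 0) = 0"
  shows "contour_integral (linepath a b) (poly (Q ^ k * pderiv P)) = 0"
proof -
  interpret abel_variation a 0 "pderiv P" "pderiv Q" 0 .
  have Vb: "fps_eval b variation = 0" by fact
  define Psi where "Psi = 1 - fps_X * fps_const Q"
  have E: "base * Psi = fps_X"
    unfolding Psi_def base_eq by (rule abel_series_quadratic[OF Qa])
  have "fps_pderiv variation = fps_const (pderiv P) * (base * base * base) + fps_const (pderiv Q) * (2 * (base * variation))"
    using fps_pderiv_variation by simp
  then have "fps_pderiv (variation * Psi * Psi)
      = fps_const (pderiv P) * base * (base * Psi) * (base * Psi)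
        + fps_const (pderiv Q) * 2 * variation * Psi * (base * Psi - fps_X)"
    by (simp add: Psi_def algebra_simps)
  then have R: "fps_pderiv (variation * Psi * Psi) = fps_const (pderiv P) * base * fps_X * fps_X"
    by (simp add: E)
  have "contour_integral (linepath a b) (poly ((fps_const (pderiv P) * base * fps_X * fps_X) $ (k + 3)))
      = poly ((variation * Psi * Psi) $ (k + 3)) b"
    by (rule contour_integral_linepath_fps_nth[OF R]) simp
  also have "\<dots> = 0" by (metis Vb fps_eval_mult fps_eval_nth fps_zero_nth mult_zero_left)
  also have "(fps_const (pderiv P) * base * fps_X * fps_X) $ (k + 3) = Q ^ k * pderiv P"
    by (simp add: base_eq abel_series_quadratic_nth[OF Qa] mult.commute)
  finally show ?thesis .
qed

text \<open>With \<open>y = c / \<Phi>\<close>, \<open>\<Phi> = sqrt (1 - 2 P c\<^sup>2)\<close>, the first variation satisfies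
  \<open>v' = 3 P' y\<^sup>2 v + Q' y\<^sup>2\<close>, so \<open>(v \<Phi>\<^sup>3)' = Q' c\<^sup>2 \<Phi>\<close>, whose coefficient of \<open>c\<^sup>2\<^sup>k\<^sup>+\<^sup>2\<close> is a
  nonzero multiple of \<open>P\<^sup>k Q'\<close>.\<close>
lemma moments_vanish_quadratic_perturbation:
  fixes P Q :: "complex poly"
  assumes Pa: "poly P a = 0"
    and "fps_eval b (abel_variation.variation a (pderiv P) 0 0 (pderiv Q)) = 0"
  shows "contour_integral (linepath a b) (poly (P ^ k * pderiv Q)) = 0"
proof -
  interpret abel_variation a "pderiv P" 0 0 "pderiv Q" .
  have Vb: "fps_eval b variation = 0" by fact
  define Phi where "Phi = sqrt_series P"
  have EPhi: "base * Phi = fps_X"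
    unfolding Phi_def base_eq by (rule abel_series_cubic[OF Pa])
  have dPhi: "Phi * fps_pderiv Phi = - (fps_const (pderiv P) * fps_X * fps_X)"
    unfolding Phi_def by (rule sqrt_series_pderiv)
  have "fps_pderiv variation = fps_const (pderiv P) * (3 * (base * base * variation)) + fps_const (pderiv Q) * (base * base)"
    using fps_pderiv_variation by simp
  then have "fps_pderiv (variation * Phi * Phi * Phi)
      = 3 * variation * Phi * (fps_const (pderiv P) * (base * Phi) * (base * Phi) + Phi * fps_pderiv Phi)
        + fps_const (pderiv Q) * (base * Phi) * (base * Phi) * Phi"
    by (simp add: algebra_simps)
  then have R: "fps_pderiv (variation * Phi * Phi * Phi) = fps_const (pderiv Q) * fps_X * fps_X * Phi"
    by (simp add: EPhi dPhi)
  define c :: complex where "c = ((1/2) gchoose k) * (-2) ^ k"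
  have "contour_integral (linepath a b) (poly ((fps_const (pderiv Q) * fps_X * fps_X * Phi) $ (2 * k + 2)))
      = poly ((variation * Phi * Phi * Phi) $ (2 * k + 2)) b"
    by (rule contour_integral_linepath_fps_nth[OF R]) simp
  also have "\<dots> = 0" by (metis Vb fps_eval_mult fps_eval_nth fps_zero_nth mult_zero_left)
  also have "(fps_const (pderiv Q) * fps_X * fps_X * Phi) $ (2 * k + 2) = smult c (P ^ k * pderiv Q)"
  proof -
    have "fps_const (pderiv Q) * fps_X * fps_X * Phi = fps_X * (fps_X * (fps_const (pderiv Q) * Phi))"
      by (simp add: algebra_simps)
    then have "(fps_const (pderiv Q) * fps_X * fps_X * Phi) $ (2 * k + 2) = pderiv Q * Phi $ (2 * k)"
      by (simp only: fps_X_mult_nth fps_mult_left_const_nth) simp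
    moreover have "Phi $ (2 * k) = smult c (P ^ k)"
      unfolding Phi_def sqrt_series_nth_double c_def by (simp only: smult_power smult_smult)
    ultimately show ?thesis by (simp add: mult.commute)
  qed
  finally have "c * contour_integral (linepath a b) (poly (P ^ k * pderiv Q)) = 0"
    by (simp only: contour_integral_linepath_poly_smult)
  moreover have "c \<noteq> 0" by (simp add: c_def gbinomial_half_neq_0)
  ultimately show ?thesis by simp
qed


section \<open>Convergence and the center condition\<close>

text \<open>Uniqueness: \<open>(Y\<^sub>1 - Y\<^sub>2) exp (- \<integral> A)\<close> has derivative zero, where \<open>A\<close> is the
  difference quotient of the right-hand side along the two solutions.\<close>
lemma cubic_ode_unique:
  fixes Y1 Y2 P Q :: "real \<Rightarrow> complex" and c :: complex
  assumes cP: "continuous_on {0..1} P" and cQ: "continuous_on {0..1} Q"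
    and Y1: "\<And>t. t \<in> {0..1} \<Longrightarrow>
      (Y1 has_vector_derivative (c * (P t * (Y1 t)^3 + Q t * (Y1 t)^2))) (at t within {0..1})"
    and Y2: "\<And>t. t \<in> {0..1} \<Longrightarrow>
      (Y2 has_vector_derivative (c * (P t * (Y2 t)^3 + Q t * (Y2 t)^2))) (at t within {0..1})"
    and "Y1 0 = Y2 0"
  shows "Y1 1 = Y2 1"
proof -
  define A where "A t = c * (P t * ((Y1 t)^2 + Y1 t * Y2 t + (Y2 t)^2) + Q t * (Y1 t + Y2 t))" for t
  have "continuous_on {0..1} A"
    unfolding A_def using continuous_on_vector_derivative[OF Y1] continuous_on_vector_derivative[OF Y2]
    by (intro continuous_intros cP cQ)
  define G where "G t = (Y1 t - Y2 t) * exp (- integral {0..t} A)" for t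
  have "(G has_vector_derivative 0) (at t within {0..1})" if t: "t \<in> {0..1}" for t
  proof -
    have "((\<lambda>t. - integral {0..t} A) has_vector_derivative - A t) (at t within {0..1})"
      by (intro has_vector_derivative_minus integral_has_vector_derivative \<open>continuous_on {0..1} A\<close> t)
    from field_vector_diff_chain_within[OF this DERIV_exp[THEN has_field_derivative_at_within]]
    have dE: "((\<lambda>t. exp (- integral {0..t} A)) has_vector_derivative (- A t * exp (- integral {0..t} A)))
        (at t within {0..1})"
      by (simp add: o_def)
    have "c * (P t * (Y1 t)^3 + Q t * (Y1 t)^2) - c * (P t * (Y2 t)^3 + Q t * (Y2 t)^2) = A t * (Y1 t - Y2 t)"
      unfolding A_def by (simp add: algebra_simps power2_eq_square power3_eq_cube)
    with has_vector_derivative_diff[OF Y1[OF t] Y2[OF t]]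
    have dD: "((\<lambda>t. Y1 t - Y2 t) has_vector_derivative (A t * (Y1 t - Y2 t))) (at t within {0..1})"
      by simp
    from has_vector_derivative_mult[OF dD dE] show ?thesis
      unfolding G_def by (simp add: algebra_simps)
  qed
  then obtain k where "\<And>t. t \<in> {0..1} \<Longrightarrow> G t = k"
    using has_vector_derivative_zero_constant[of "{0..1::real}" G] by auto
  then have "G 1 = G 0" by auto
  then show ?thesis using assms(5) by (simp add: G_def)
qed

lemma fps_mult_nth_nonneg:
  fixes f g :: "real fps"
  assumes "\<And>i. f $ i \<ge> 0" "\<And>i. g $ i \<ge> 0"
  shows "(f * g) $ n \<ge> 0"
  unfolding fps_mult_nth using assms by (intro sum_nonneg) auto

lemma norm_fps_mult_nth_le:
  fixes f g :: "'a::{real_normed_algebra, comm_ring_1} fps" and F G :: "real fps"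
  assumes "\<And>i. norm (f $ i) \<le> F $ i" "\<And>i. norm (g $ i) \<le> G $ i"
  shows "norm ((f * g) $ n) \<le> (F * G) $ n"
proof -
  have "norm ((f * g) $ n) \<le> (\<Sum>i=0..n. norm (f $ i) * norm (g $ (n - i)))"
    unfolding fps_mult_nth by (intro order.trans[OF norm_sum] sum_mono norm_mult_ineq)
  also have "\<dots> \<le> (\<Sum>i=0..n. F $ i * G $ (n - i))"
    using assms by (intro sum_mono mult_mono) (auto intro: order.trans[OF norm_ge_zero])
  finally show ?thesis by (simp add: fps_mult_nth)
qed

lemma suminf_fps_mult:
  fixes f g :: "'a::{real_normed_field, banach} fps"
  assumes "summable (\<lambda>k. norm (f $ k * y ^ k))" "summable (\<lambda>k. norm (g $ k * y ^ k))"
  shows "(\<Sum>k. f $ k * y ^ k) * (\<Sum>k. g $ k * y ^ k) = (\<Sum>k. (f * g) $ k * y ^ k)"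
proof -
  have "(\<Sum>k. f $ k * y ^ k) * (\<Sum>k. g $ k * y ^ k) = (\<Sum>k. \<Sum>i\<le>k. (f $ i * y ^ i) * (g $ (k - i) * y ^ (k - i)))"
    by (rule Cauchy_product[OF assms])
  also have "\<dots> = (\<Sum>k. (f * g) $ k * y ^ k)"
  proof (rule suminf_cong)
    fix k
    have "(\<Sum>i\<le>k. (f $ i * y ^ i) * (g $ (k - i) * y ^ (k - i))) = (\<Sum>i\<le>k. f $ i * g $ (k - i) * y ^ k)"
      by (intro sum.cong refl) (simp add: algebra_simps flip: power_add)
    then show "(\<Sum>i\<le>k. (f $ i * y ^ i) * (g $ (k - i) * y ^ (k - i))) = (f * g) $ k * y ^ k"
      by (simp add: fps_mult_nth atLeast0AtMost sum_distrib_right)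
  qed
  finally show ?thesis .
qed

lemma sum_coeff_le_poly:
  fixes Q :: "real poly"
  assumes "\<And>i. coeff Q i \<ge> 0" "r \<ge> 0"
  shows "(\<Sum>i\<le>N. coeff Q i * r ^ i) \<le> poly Q r"
proof -
  have "(\<Sum>i\<le>N. coeff Q i * r ^ i) \<le> (\<Sum>i\<le>max N (degree Q). coeff Q i * r ^ i)"
    using assms by (intro sum_mono2) auto
  also have "\<dots> = poly Q r"
    unfolding poly_altdef by (rule sum.mono_neutral_right) (auto simp: coeff_eq_0)
  finally show ?thesis .
qed

lemma coeff_mult_nonneg:
  fixes P Q :: "real poly"
  assumes "\<And>i. coeff P i \<ge> 0" "\<And>i. coeff Q i \<ge> 0"
  shows "coeff (P * Q) n \<ge> 0"
  unfolding coeff_mult using assms by (intro sum_nonneg) auto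


lemma abel_series_id_nonneg:
  fixes A B :: real
  assumes "A \<ge> 0" "B \<ge> 0"
  shows "abel_series (\<lambda>x. x) A B $ n \<ge> 0"
proof (induction n rule: less_induct)
  case (less n)
  let ?M = "abel_series (\<lambda>x. x) A B"
  show ?case
  proof (cases "n \<ge> 2")
    case True
    let ?T = "fps_cutoff n ?M"
    have T: "\<And>i. i < n \<Longrightarrow> ?T $ i = ?M $ i" and T0: "?T $ 0 = 0" by simp_all
    have "\<And>i. ?T $ i \<ge> 0" using less.IH by simp
    then have "(?T * ?T * ?T) $ n \<ge> 0" "(?T * ?T) $ n \<ge> 0"
      by (auto intro!: fps_mult_nth_nonneg)
    moreover have "(?T * ?T * ?T) $ n = (?M * ?M * ?M) $ n" "(?T * ?T) $ n = (?M * ?M) $ n"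
      by (auto intro!: fps_cube_nth_cong fps_square_nth_cong T)
    ultimately show ?thesis using assms by (simp add: abel_series_nth[OF True])
  next
    case False
    then have "n = 0 \<or> n = 1" by auto
    then show ?thesis by auto
  qed
qed

text \<open>The Abel series of \<open>y' = L (y\<^sup>3 + y\<^sup>2)\<close> with the identity as integration operator is a
  majorant of the Abel series of \<open>y' = p y\<^sup>3 + q y\<^sup>2\<close> on \<open>[a, b]\<close> when \<open>L\<close> bounds \<open>|b - a| |p|\<close>
  and \<open>|b - a| |q|\<close>; it converges at \<open>r = 1/(16 L)\<close>.\<close>
locale abel_majorant =
  fixes L :: real
  assumes L_ge_1: "L \<ge> 1"
begin

definition "M = abel_series (\<lambda>x. x) L L"
definition "r = 1 / (16 * L)"

lemma r_pos: "r > 0"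
  using L_ge_1 by (simp add: r_def)

lemma M_nonneg: "M $ n \<ge> 0"
  unfolding M_def using L_ge_1 by (intro abel_series_id_nonneg) auto

lemma M2_nonneg: "(M * M) $ n \<ge> 0" and M3_nonneg: "(M * M * M) $ n \<ge> 0"
  by (intro fps_mult_nth_nonneg M_nonneg)+

lemma M_eq: "M $ n = (if n = 1 then 1 else 0) + L * (M * M * M) $ n + L * (M * M) $ n"
proof (cases "n \<ge> 2")
  case True
  then show ?thesis unfolding M_def by (simp add: abel_series_nth)
next
  case False
  then have "n = 0 \<or> n = 1" by auto
  then show ?thesis by (auto simp: M_def fps_mult_nth_1)
qed

lemma M2_le: "L * (M * M) $ n \<le> M $ n" and M3_le: "L * (M * M * M) $ n \<le> M $ n"
  using M_eq[of n] M2_nonneg[of n] M3_nonneg[of n] L_ge_1 by (auto simp: add_increasing)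

text \<open>The partial sums \<open>T\<close> satisfy \<open>T(r) \<le> r + L T(r)\<^sup>3 + L T(r)\<^sup>2\<close> coefficientwise, and
  \<open>r + L (2r)\<^sup>3 + L (2r)\<^sup>2 \<le> 2r\<close> by the choice of \<open>r\<close>.\<close>
lemma M_partial_sums_le: "(\<Sum>i<N. M $ i * r ^ i) \<le> 2 * r"
proof (induction N)
  case 0
  then show ?case using r_pos by simp
next
  case (Suc N)
  define T where "T = (\<Sum>i<N. monom (M $ i) i)"
  have cT: "coeff T i = (if i < N then M $ i else 0)" for i
    unfolding T_def by (simp add: coeff_sum)
  have pT: "poly T r = (\<Sum>i<N. M $ i * r ^ i)"
    unfolding T_def by (simp add: poly_sum poly_monom)
  have T_nonneg: "coeff T i \<ge> 0" for i using M_nonneg by (simp add: cT)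
  define S where "S = monom 1 1 + smult L (T * T * T) + smult L (T * T)"
  have cS: "M $ i = coeff S i" if "i \<le> N" for i
  proof -
    let ?F = "fps_of_poly T"
    have F: "\<And>j. j < i \<Longrightarrow> ?F $ j = M $ j" using that by (simp add: cT)
    have "(?F * ?F * ?F) $ i = (M * M * M) $ i" by (rule fps_cube_nth_cong[OF _ _ F]) (simp_all add: cT M_def)
    moreover have "(?F * ?F) $ i = (M * M) $ i" by (rule fps_square_nth_cong[OF _ _ F]) (simp_all add: cT M_def)
    ultimately show ?thesis by (subst M_eq) (simp add: S_def coeff_monom flip: fps_of_poly_mult)
  qed
  have S_nonneg: "coeff S i \<ge> 0" for i
    unfolding S_def using L_ge_1 T_nonneg
    by (auto simp: coeff_monom intro!: add_nonneg_nonneg mult_nonneg_nonneg coeff_mult_nonneg)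
  have T_bound: "0 \<le> poly T r" "poly T r \<le> 2 * r"
    using Suc.IH M_nonneg r_pos unfolding pT by (auto intro!: sum_nonneg)
  have "(\<Sum>i<Suc N. M $ i * r ^ i) = (\<Sum>i\<le>N. coeff S i * r ^ i)"
    unfolding lessThan_Suc_atMost by (intro sum.cong) (auto simp: cS)
  also have "\<dots> \<le> poly S r" using r_pos by (intro sum_coeff_le_poly S_nonneg) auto
  also have "\<dots> = r + L * (poly T r)^3 + L * (poly T r)^2"
    by (simp add: S_def poly_monom power3_eq_cube power2_eq_square)
  also have "\<dots> \<le> r + L * (2 * r)^3 + L * (2 * r)^2"
    using T_bound L_ge_1 by (intro add_mono mult_left_mono power_mono) auto
  also have "\<dots> = r + (8 * r^2 + 4 * r) * (L * r)"
    by (simp add: algebra_simps power2_eq_square power3_eq_cube)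
  also have "\<dots> \<le> 2 * r"
  proof -
    have Lr: "L * r = 1/16" and "r \<le> 1/16" using L_ge_1 by (simp_all add: r_def field_simps)
    have "r * r \<le> r" using r_pos \<open>r \<le> 1/16\<close> by (intro mult_right_le_one_le) auto
    then show ?thesis unfolding Lr power2_eq_square using r_pos by (simp add: field_simps)
  qed
  finally show ?case .
qed

lemma M_summable: "summable (\<lambda>n. M $ n * r ^ n)"
  using M_nonneg r_pos M_partial_sums_le by (intro summableI_nonneg_bounded[where x = "2 * r"]) auto

lemma M2_summable: "summable (\<lambda>n. (M * M) $ n * r ^ n)"
  and M3_summable: "summable (\<lambda>n. (M * M * M) $ n * r ^ n)"
  using M2_le M3_le M2_nonneg M3_nonneg L_ge_1 r_pos
  by (auto intro!: summable_comparison_test'[OF summable_mult[OF M_summable, of "1/L"]]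
           simp: field_simps)

end


lemma norm_poly_pprimitive_le:
  fixes F :: "complex poly"
  assumes F: "\<And>w. w \<in> closed_segment a b \<Longrightarrow> norm (poly F w) \<le> C" and z: "z \<in> closed_segment a b"
  shows "norm (poly (pprimitive a F) z) \<le> C * norm (b - a)"
proof -
  have "norm (poly (pprimitive a F) z - poly (pprimitive a F) a) \<le> C * norm (z - a)"
    using F z by (intro field_differentiable_bound[where S = "closed_segment a b"])
      (auto intro: poly_DERIV[of "pprimitive a F", simplified, THEN has_field_derivative_at_within])
  also have "\<dots> \<le> C * norm (b - a)"
    using F[of a] z segment_bound1[of z a b] by (intro mult_left_mono) (auto intro: order.trans[OF norm_ge_zero])
  finally show ?thesis by simp
qed

lemma norm_mult_power_le:
  fixes x y :: "'a::real_normed_div_algebra"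
  assumes "norm y \<le> r" "norm x \<le> F"
  shows "norm (x * y ^ n) \<le> F * r ^ n"
proof -
  have "norm y ^ n \<le> r ^ n" using assms(1) by (intro power_mono) auto
  then show ?thesis
    using assms(2) by (simp add: norm_mult norm_power mult_mono order.trans[OF norm_ge_zero])
qed

lemma norm_poly_fps_mult_nth_le:
  fixes f g :: "complex poly fps"
  assumes "\<And>i. norm (poly (f $ i) z) \<le> F $ i" "\<And>i. norm (poly (g $ i) z) \<le> G $ i"
  shows "norm (poly ((f * g) $ n) z) \<le> (F * G) $ n"
proof -
  have "poly ((f * g) $ n) z = (fps_eval z f * fps_eval z g) $ n"
    by (metis fps_eval_mult fps_eval_nth)
  then show ?thesis using assms by (simp add: norm_fps_mult_nth_le)
qed

lemma powser_sums_zero_imp_coeffs_zero: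
  fixes c :: "nat \<Rightarrow> 'a::{real_normed_field, banach}"
  assumes "\<rho> > 0" and sums: "\<And>x. norm x < \<rho> \<Longrightarrow> (\<lambda>n. c n * x ^ n) sums 0"
  shows "c n = 0"
proof (rule ccontr)
  assume "c n \<noteq> 0"
  have "c 0 = 0" using sums[of 0] powser_sums_zero[of c] \<open>\<rho> > 0\<close> sums_unique2 by auto
  then have "n > 0" using \<open>c n \<noteq> 0\<close> by (cases n) auto
  show False
  proof (rule powser_0_nonzero[of \<rho> 0 c "\<lambda>_. 0" n])
    fix s :: real assume "0 < s" and "\<And>z :: 'a. z \<in> cball 0 s - {0} \<Longrightarrow> 0 \<noteq> 0"
    moreover have "of_real s \<in> cball (0 :: 'a) s - {0}" using \<open>0 < s\<close> by simp
    ultimately show False by blast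
  qed (use sums \<open>\<rho> > 0\<close> \<open>c n \<noteq> 0\<close> \<open>n > 0\<close> in simp_all)
qed

locale abel_bounded =
  fixes p q :: "complex poly" and a b :: complex and K :: real
  assumes bound: "\<And>z. z \<in> closed_segment a b \<Longrightarrow> norm (poly p z) \<le> K \<and> norm (poly q z) \<le> K"
begin

lemma K_nonneg: "K \<ge> 0"
  using bound[of a] by (auto intro: order.trans[OF norm_ge_zero])

sublocale abel_majorant "norm (b - a) * K + 1"
  by unfold_locales (simp add: K_nonneg)

definition "Y = abel_series (pprimitive a) p q"

lemma norm_Y_le: "z \<in> closed_segment a b \<Longrightarrow> norm (poly (Y $ n) z) \<le> M $ n"
proof (induction n arbitrary: z rule: less_induct)
  case (less n)
  show ?case
  proof (cases "n \<ge> 2")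
    case True
    let ?TY = "fps_cutoff n Y" and ?TM = "fps_cutoff n M"
    have T: "norm (poly (?TY $ i) w) \<le> ?TM $ i" if "w \<in> closed_segment a b" for i w
      using less.IH that by (simp add: M_nonneg)
    have "(?TY * ?TY * ?TY) $ n = (Y * Y * Y) $ n" "(?TY * ?TY) $ n = (Y * Y) $ n"
      by (auto simp: Y_def intro!: fps_cube_nth_cong fps_square_nth_cong)
    moreover have "(?TM * ?TM * ?TM) $ n = (M * M * M) $ n" "(?TM * ?TM) $ n = (M * M) $ n"
      by (auto simp: M_def intro!: fps_cube_nth_cong fps_square_nth_cong)
    ultimately have Y3: "norm (poly ((Y * Y * Y) $ n) w) \<le> (M * M * M) $ n"
        and Y2: "norm (poly ((Y * Y) $ n) w) \<le> (M * M) $ n" if "w \<in> closed_segment a b" for w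
      using T[OF that] by (metis norm_poly_fps_mult_nth_le)+
    define F where "F = p * (Y * Y * Y) $ n + q * (Y * Y) $ n"
    have "norm (poly F w) \<le> K * ((M * M * M) $ n + (M * M) $ n)" if w: "w \<in> closed_segment a b" for w
    proof -
      have "norm (poly F w) \<le> norm (poly p w) * norm (poly ((Y * Y * Y) $ n) w)
                                + norm (poly q w) * norm (poly ((Y * Y) $ n) w)"
        unfolding F_def by (simp add: norm_mult[symmetric] norm_triangle_ineq)
      also have "\<dots> \<le> K * (M * M * M) $ n + K * (M * M) $ n"
        using bound[OF w] Y3[OF w] Y2[OF w] K_nonneg by (intro add_mono mult_mono) auto
      finally show ?thesis by (simp add: distrib_left)
    qed
    moreover have "Y $ n = pprimitive a F"
      unfolding F_def Y_def by (rule abel_series_nth[OF True])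
    ultimately have "norm (poly (Y $ n) z) \<le> K * ((M * M * M) $ n + (M * M) $ n) * norm (b - a)"
      using less.prems by (simp add: norm_poly_pprimitive_le)
    also have "\<dots> \<le> (norm (b - a) * K + 1) * ((M * M * M) $ n + (M * M) $ n)"
      using M2_nonneg[of n] M3_nonneg[of n] by (simp add: algebra_simps)
    also have "\<dots> = M $ n" using True by (simp add: M_eq distrib_left)
    finally show ?thesis .
  next
    case False
    then have "n = 0 \<or> n = 1" by auto
    then show ?thesis by (auto simp: Y_def M_def)
  qed
qed


lemma norm_Y2_le: "z \<in> closed_segment a b \<Longrightarrow> norm (poly ((Y * Y) $ n) z) \<le> (M * M) $ n"
  by (rule norm_poly_fps_mult_nth_le) (auto intro: norm_Y_le)

lemma norm_Y3_le: "z \<in> closed_segment a b \<Longrightarrow> norm (poly ((Y * Y * Y) $ n) z) \<le> (M * M * M) $ n"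
  by (rule norm_poly_fps_mult_nth_le) (auto intro: norm_Y_le norm_Y2_le)

lemma Y_abs_summable:
  assumes "z \<in> closed_segment a b" "norm y \<le> r"
  shows "summable (\<lambda>n. norm (poly (Y $ n) z * y ^ n))"
    and "summable (\<lambda>n. norm (poly ((Y * Y) $ n) z * y ^ n))"
    and "summable (\<lambda>n. norm (poly ((Y * Y * Y) $ n) z * y ^ n))"
proof -
  show "summable (\<lambda>n. norm (poly (Y $ n) z * y ^ n))"
    by (rule summable_comparison_test'[OF M_summable]) (use assms in \<open>auto intro!: norm_mult_power_le norm_Y_le\<close>)
  show "summable (\<lambda>n. norm (poly ((Y * Y) $ n) z * y ^ n))"
    by (rule summable_comparison_test'[OF M2_summable]) (use assms in \<open>auto intro!: norm_mult_power_le norm_Y2_le\<close>)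
  show "summable (\<lambda>n. norm (poly ((Y * Y * Y) $ n) z * y ^ n))"
    by (rule summable_comparison_test'[OF M3_summable]) (use assms in \<open>auto intro!: norm_mult_power_le norm_Y3_le\<close>)
qed

definition "abel_sum y z = (\<Sum>n. poly (Y $ n) z * y ^ n)"

lemma abel_sum_power:
  assumes "z \<in> closed_segment a b" "norm y \<le> r"
  shows "(abel_sum y z)^2 = (\<Sum>n. poly ((Y * Y) $ n) z * y ^ n)"
    and "(abel_sum y z)^3 = (\<Sum>n. poly ((Y * Y * Y) $ n) z * y ^ n)"
proof -
  show sq: "(abel_sum y z)^2 = (\<Sum>n. poly ((Y * Y) $ n) z * y ^ n)"
    using suminf_fps_mult[of "fps_eval z Y" y "fps_eval z Y"] Y_abs_summable[OF assms]
    by (simp add: abel_sum_def power2_eq_square flip: fps_eval_mult)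
  have "(abel_sum y z)^3 = (abel_sum y z)^2 * abel_sum y z"
    by (simp add: power3_eq_cube power2_eq_square)
  also have "\<dots> = (\<Sum>n. poly ((Y * Y) $ n) z * y ^ n) * (\<Sum>n. poly (Y $ n) z * y ^ n)"
    by (simp only: sq) (simp only: abel_sum_def)
  also have "\<dots> = (\<Sum>n. poly ((Y * Y * Y) $ n) z * y ^ n)"
    using suminf_fps_mult[of "fps_eval z (Y * Y)" y "fps_eval z Y"] Y_abs_summable[OF assms]
    by (simp flip: fps_eval_mult)
  finally show "(abel_sum y z)^3 = (\<Sum>n. poly ((Y * Y * Y) $ n) z * y ^ n)" .
qed

lemma abel_sum_start: "abel_sum y a = y"
proof -
  have "poly (Y $ n) a = (if n = 1 then 1 else 0)" for n
    using fps_eval_abel_series_start[of a p q] by (metis Y_def fps_X_nth fps_eval_nth)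
  then have "(\<lambda>n. poly (Y $ n) a * y ^ n) = (\<lambda>n. if n = 1 then y ^ n else 0)" by auto
  then show ?thesis using sums_unique[OF sums_single[of 1 "\<lambda>n. y ^ n"]] by (simp add: abel_sum_def)
qed

lemma pderiv_Y: "pderiv (Y $ n) = p * (Y * Y * Y) $ n + q * (Y * Y) $ n"
  unfolding Y_def by (rule abel_series_deriv) auto

lemma abel_sum_deriv_uniform_limit:
  assumes y: "norm y \<le> r"
  shows "uniform_limit (closed_segment a b) (\<lambda>n w. \<Sum>i<n. poly (pderiv (Y $ i)) w * y ^ i)
           (\<lambda>w. \<Sum>i. poly (pderiv (Y $ i)) w * y ^ i) sequentially"
proof (rule Weierstrass_m_test)
  show "summable (\<lambda>n. K * ((M * M * M) $ n * r ^ n) + K * ((M * M) $ n * r ^ n))"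
    by (intro summable_add summable_mult M2_summable M3_summable)
  fix n w assume w: "w \<in> closed_segment a b"
  have "norm (poly (pderiv (Y $ n)) w * y ^ n) \<le> norm (poly p w) * norm (poly ((Y * Y * Y) $ n) w * y ^ n)
                        + norm (poly q w) * norm (poly ((Y * Y) $ n) w * y ^ n)"
    unfolding pderiv_Y by (simp add: algebra_simps norm_mult[symmetric] norm_triangle_ineq)
  also have "\<dots> \<le> K * ((M * M * M) $ n * r ^ n) + K * ((M * M) $ n * r ^ n)"
    using bound[OF w] K_nonneg
    by (intro add_mono mult_mono norm_mult_power_le norm_Y3_le norm_Y2_le w y) auto
  finally show "norm (poly (pderiv (Y $ n)) w * y ^ n) \<le> K * ((M * M * M) $ n * r ^ n) + K * ((M * M) $ n * r ^ n)" .
qed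

lemma abel_sum_has_derivative:
  assumes y: "norm y \<le> r" and z: "z \<in> closed_segment a b"
  shows "(abel_sum y has_field_derivative poly p z * (abel_sum y z)^3 + poly q z * (abel_sum y z)^2)
           (at z within closed_segment a b)"
proof -
  have "summable (\<lambda>n. poly (Y $ n) a * y ^ n)"
    using Y_abs_summable(1)[of a y] y by (auto intro: summable_norm_cancel)
  then have "\<exists>g. \<forall>w\<in>closed_segment a b. (\<lambda>n. poly (Y $ n) w * y ^ n) sums g w
      \<and> (g has_field_derivative (\<Sum>i. poly (pderiv (Y $ i)) w * y ^ i)) (at w within closed_segment a b)"
    by (intro has_field_derivative_series[OF convex_closed_segment _ abel_sum_deriv_uniform_limit[OF y]])
       (auto intro!: derivative_eq_intros)
  then obtain g where g: "\<And>w. w \<in> closed_segment a b \<Longrightarrow> (\<lambda>n. poly (Y $ n) w * y ^ n) sums g w"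
      "\<And>w. w \<in> closed_segment a b \<Longrightarrow>
        (g has_field_derivative (\<Sum>i. poly (pderiv (Y $ i)) w * y ^ i)) (at w within closed_segment a b)"
    by blast
  have s3: "summable (\<lambda>n. poly ((Y * Y * Y) $ n) z * y ^ n)"
    and s2: "summable (\<lambda>n. poly ((Y * Y) $ n) z * y ^ n)"
    using Y_abs_summable[OF z y] by (auto intro: summable_norm_cancel)
  have "(\<Sum>i. poly (pderiv (Y $ i)) z * y ^ i)
      = (\<Sum>n. poly p z * (poly ((Y * Y * Y) $ n) z * y ^ n) + poly q z * (poly ((Y * Y) $ n) z * y ^ n))"
    unfolding pderiv_Y by (simp add: algebra_simps)
  also have "\<dots> = (\<Sum>n. poly p z * (poly ((Y * Y * Y) $ n) z * y ^ n))
                        + (\<Sum>n. poly q z * (poly ((Y * Y) $ n) z * y ^ n))"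
    by (intro suminf_add[symmetric] summable_mult s2 s3)
  also have "\<dots> = poly p z * (abel_sum y z)^3 + poly q z * (abel_sum y z)^2"
    using s2 s3 by (simp only: suminf_mult abel_sum_power[OF z y])
  finally have "(g has_field_derivative poly p z * (abel_sum y z)^3 + poly q z * (abel_sum y z)^2)
      (at z within closed_segment a b)"
    using g(2)[OF z] by (simp only:)
  moreover have "g w = abel_sum y w" if "w \<in> closed_segment a b" for w
    using sums_unique[OF g(1)[OF that]] by (simp only: abel_sum_def)
  ultimately show ?thesis
    using has_field_derivative_transform_within[OF _ zero_less_one z] by blast
qed

lemma abel_sum_end: "norm y \<le> r \<Longrightarrow> (\<lambda>n. poly (Y $ n) b * y ^ n) sums abel_sum y b"
  unfolding abel_sum_def using Y_abs_summable(1)[of b y] by (auto intro: summable_sums summable_norm_cancel)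

lemma abel_sum_solves:
  assumes "norm y \<le> r" and t: "t \<in> {0..1}"
  shows "((\<lambda>t. abel_sum y (a + of_real t * (b - a))) has_vector_derivative
           (b - a) * (poly p (a + of_real t * (b - a)) * (abel_sum y (a + of_real t * (b - a)))^3
                      + poly q (a + of_real t * (b - a)) * (abel_sum y (a + of_real t * (b - a)))^2))
         (at t within {0..1})"
proof -
  define x where "x t = a + of_real t * (b - a)" for t :: real
  have x_seg: "x ` {0..1} \<subseteq> closed_segment a b"
    by (auto simp: x_def in_segment scaleR_conv_of_real algebra_simps)
  have "(x has_vector_derivative (b - a)) (at t within {0..1})"
    unfolding x_def by (auto intro!: derivative_eq_intros simp: scaleR_conv_of_real)
  moreover have "(abel_sum y has_field_derivative
      poly p (x t) * (abel_sum y (x t))^3 + poly q (x t) * (abel_sum y (x t))^2) (at (x t) within x ` {0..1})"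
    using x_seg t assms(1) by (intro has_field_derivative_subset[OF abel_sum_has_derivative]) auto
  ultimately have "(abel_sum y \<circ> x has_vector_derivative (b - a) *
      (poly p (x t) * (abel_sum y (x t))^3 + poly q (x t) * (abel_sum y (x t))^2)) (at t within {0..1})"
    by (rule field_vector_diff_chain_within)
  then show ?thesis by (simp add: x_def o_def)
qed

lemma has_center_if_vanish:
  assumes "\<And>n. n \<ge> 2 \<Longrightarrow> poly (Y $ n) b = 0"
  shows "has_center (poly p) (poly q) a b"
proof -
  have "abel_sum y b = y" if "norm y \<le> r" for y
  proof -
    have "poly (Y $ n) b * y ^ n = (if n = 1 then y ^ n else 0)" for n
    proof (cases "n \<ge> 2")
      case False
      then have "n = 0 \<or> n = 1" by auto
      then show ?thesis by (auto simp: Y_def)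
    qed (use assms in auto)
    then have "(\<lambda>n. poly (Y $ n) b * y ^ n) = (\<lambda>n. if n = 1 then y ^ n else 0)" by auto
    then show ?thesis
      using abel_sum_end[OF that] sums_unique2 sums_single[of 1 "\<lambda>n. y ^ n"] by force
  qed
  then show ?thesis
    unfolding has_center_def
  proof (intro exI[of _ r] conjI allI impI)
    fix W :: "real \<Rightarrow> complex"
    assume "norm (W 0) < r \<and> (\<forall>t\<in>{0..1}. (W has_vector_derivative
      (b - a) * (poly p (a + of_real t * (b - a)) * (W t)^3 + poly q (a + of_real t * (b - a)) * (W t)^2))
      (at t within {0..1}))"
    then have W0: "norm (W 0) < r" and W: "\<And>t. t \<in> {0..1} \<Longrightarrow> (W has_vector_derivative
      (b - a) * (poly p (a + of_real t * (b - a)) * (W t)^3 + poly q (a + of_real t * (b - a)) * (W t)^2))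
      (at t within {0..1})" by auto
    have "W 1 = abel_sum (W 0) (a + of_real 1 * (b - a))"
    proof (rule cubic_ode_unique[where c = "b - a", OF _ _ W])
      show "continuous_on {0..1} (\<lambda>t. poly p (a + of_real t * (b - a)))"
        and "continuous_on {0..1} (\<lambda>t. poly q (a + of_real t * (b - a)))"
        by (intro continuous_intros)+
      show "W 0 = abel_sum (W 0) (a + of_real 0 * (b - a))" by (simp add: abel_sum_start)
    qed (use W0 in \<open>simp_all add: abel_sum_solves\<close>)
    also have "\<dots> = W 0" using W0 \<open>\<And>y. norm y \<le> r \<Longrightarrow> abel_sum y b = y\<close> by simp
    finally show "W 1 = W 0" .
  qed (rule r_pos)
qed

text \<open>On a center, \<open>c \<mapsto> abel_sum c b - c\<close> vanishes near \<open>0\<close>, so all its Taylor coefficients vanish.\<close>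
lemma vanish_if_has_center:
  assumes "has_center (poly p) (poly q) a b" and "n \<ge> 2"
  shows "poly (Y $ n) b = 0"
proof -
  obtain \<delta> where "\<delta> > 0" and center: "\<And>W :: real \<Rightarrow> complex. norm (W 0) < \<delta> \<Longrightarrow>
      (\<forall>t\<in>{0..1}. (W has_vector_derivative (b - a) * (poly p (a + of_real t * (b - a)) * (W t)^3
        + poly q (a + of_real t * (b - a)) * (W t)^2)) (at t within {0..1})) \<Longrightarrow> W 1 = W 0"
    using assms(1) unfolding has_center_def by blast
  have "(\<lambda>n. (poly (Y $ n) b - (if n = 1 then 1 else 0)) * y ^ n) sums 0" if y: "norm y < min \<delta> r" for y
  proof -
    have "abel_sum y b = y"
      using center[of "\<lambda>t. abel_sum y (a + of_real t * (b - a))"] y abel_sum_solves[of y]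
      by (simp add: abel_sum_start)
    then have "(\<lambda>n. poly (Y $ n) b * y ^ n) sums y" using abel_sum_end[of y] y by simp
    from sums_diff[OF this sums_single[of 1 "\<lambda>n. y ^ n"]]
    have "(\<lambda>n. poly (Y $ n) b * y ^ n - (if n = 1 then y ^ n else 0)) sums 0" by simp
    moreover have "(\<lambda>n. poly (Y $ n) b * y ^ n - (if n = 1 then y ^ n else 0))
        = (\<lambda>n. (poly (Y $ n) b - (if n = 1 then 1 else 0)) * y ^ n)"
      by (auto simp: fun_eq_iff algebra_simps)
    ultimately show ?thesis by simp
  qed
  then have "poly (Y $ n) b - (if n = 1 then 1 else 0) = 0"
    using \<open>\<delta> > 0\<close> r_pos by (intro powser_sums_zero_imp_coeffs_zero[of "min \<delta> r"]) auto
  then show ?thesis using \<open>n \<ge> 2\<close> by simp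
qed

end

lemma has_center_iff_abel_series_vanish:
  "has_center (poly p) (poly q) a b \<longleftrightarrow> (\<forall>n\<ge>2. poly (abel_series (pprimitive a) p q $ n) b = 0)"
proof -
  have "compact ((\<lambda>z. norm (poly p z) + norm (poly q z)) ` closed_segment a b)"
    by (intro compact_continuous_image continuous_intros) auto
  then obtain K where K: "\<And>z. z \<in> closed_segment a b \<Longrightarrow> norm (norm (poly p z) + norm (poly q z)) \<le> K"
    by (meson bounded_iff compact_imp_bounded imageI)
  interpret abel_bounded p q a b K
  proof
    fix z assume "z \<in> closed_segment a b"
    with K[of z] have "norm (poly p z) + norm (poly q z) \<le> K" by simp
    then show "norm (poly p z) \<le> K \<and> norm (poly q z) \<le> K"
      using norm_ge_zero[of "poly p z"] norm_ge_zero[of "poly q z"] by linarith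
  qed
  show ?thesis using has_center_if_vanish vanish_if_has_center by (auto simp: Y_def)
qed

section \<open>Composition and parametric centers\<close>

lemma has_center_pcompose:
  fixes Pt Qt W :: "complex poly"
  assumes "poly W a = poly W b"
  shows "has_center (poly (pderiv (pcompose Pt W))) (\<lambda>x. e * poly (pderiv (pcompose Qt W)) x) a b"
proof -
  have "(\<lambda>x. e * poly (pderiv (pcompose Qt W)) x) = poly (pcompose (smult e (pderiv Qt)) W * pderiv W)"
    by (simp add: pderiv_pcompose pcompose_smult fun_eq_iff)
  moreover have "pderiv (pcompose Pt W) = pcompose (pderiv Pt) W * pderiv W"
    by (rule pderiv_pcompose)
  ultimately show ?thesis
    using assms by (simp add: has_center_iff_abel_series_vanish abel_series_pcompose_vanish)
qed

text \<open>The substitution \<open>y = \<epsilon> v\<close> turns \<open>y' = \<mu> p y\<^sup>3 + q y\<^sup>2\<close> into \<open>v' = p v\<^sup>3 + \<epsilon> q v\<^sup>2\<close>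
  when \<open>\<mu> \<epsilon>\<^sup>2 = 1\<close>.\<close>
lemma has_center_scale:
  assumes center: "has_center (poly p) (\<lambda>x. \<epsilon> * poly q x) a b" and "\<epsilon> \<noteq> 0" and "\<mu> * \<epsilon>^2 = 1"
  shows "has_center (poly (smult \<mu> p)) (poly q) a b"
proof -
  obtain \<delta> where "\<delta> > 0" and C: "\<And>V :: real \<Rightarrow> complex. norm (V 0) < \<delta> \<Longrightarrow>
      (\<forall>t\<in>{0..1}. (V has_vector_derivative (b - a) * (poly p (a + of_real t * (b - a)) * (V t)^3
        + \<epsilon> * poly q (a + of_real t * (b - a)) * (V t)^2)) (at t within {0..1})) \<Longrightarrow> V 1 = V 0"
    using center unfolding has_center_def by blast
  show ?thesis
    unfolding has_center_def
  proof (intro exI[of _ "\<delta> * norm \<epsilon>"] conjI allI impI)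
    show "\<delta> * norm \<epsilon> > 0" using \<open>\<delta> > 0\<close> \<open>\<epsilon> \<noteq> 0\<close> by simp
    fix W :: "real \<Rightarrow> complex"
    assume "norm (W 0) < \<delta> * norm \<epsilon> \<and> (\<forall>t\<in>{0..1}. (W has_vector_derivative
      (b - a) * (poly (smult \<mu> p) (a + of_real t * (b - a)) * (W t)^3 + poly q (a + of_real t * (b - a)) * (W t)^2))
      (at t within {0..1}))"
    then have W0: "norm (W 0) < \<delta> * norm \<epsilon>" and W: "\<And>t. t \<in> {0..1} \<Longrightarrow> (W has_vector_derivative
      (b - a) * (poly (smult \<mu> p) (a + of_real t * (b - a)) * (W t)^3 + poly q (a + of_real t * (b - a)) * (W t)^2))
      (at t within {0..1})" by auto
    have "(\<lambda>t. W t / \<epsilon>) 1 = (\<lambda>t. W t / \<epsilon>) 0"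
    proof (rule C)
      show "norm (W 0 / \<epsilon>) < \<delta>" using W0 \<open>\<epsilon> \<noteq> 0\<close> by (simp add: norm_divide pos_divide_less_eq)
      have \<mu>: "\<mu> = 1 / \<epsilon>^2" using \<open>\<mu> * \<epsilon>^2 = 1\<close> \<open>\<epsilon> \<noteq> 0\<close> by (simp add: field_simps)
      have "(b - a) * (poly (smult \<mu> p) x * (W t)^3 + poly q x * (W t)^2) / \<epsilon>
          = (b - a) * (poly p x * (W t / \<epsilon>)^3 + \<epsilon> * poly q x * (W t / \<epsilon>)^2)" for x t
        using \<open>\<epsilon> \<noteq> 0\<close> unfolding \<mu> by (simp add: field_simps power2_eq_square power3_eq_cube)
      with W show "\<forall>t\<in>{0..1}. ((\<lambda>t. W t / \<epsilon>) has_vector_derivative (b - a) * (poly p (a + of_real t * (b - a))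
          * (W t / \<epsilon>)^3 + \<epsilon> * poly q (a + of_real t * (b - a)) * (W t / \<epsilon>)^2)) (at t within {0..1})"
        by (metis has_vector_derivative_divide)
    qed
    then show "W 1 = W 0" using \<open>\<epsilon> \<noteq> 0\<close> by simp
  qed
qed

lemma COS_subset_PCS: "COS d a b \<subseteq> PCS d a b"
  unfolding COS_def PCS_def using has_center_pcompose by blast

lemma PCS_subset_MS: "PCS d a b \<subseteq> MS d a b"
proof safe
  fix P Q assume "(P, Q) \<in> PCS d a b"
  then have P: "P \<in> Pd d a b" and Q: "Q \<in> Pd d a b"
    and center: "\<And>\<epsilon>. has_center (poly (pderiv P)) (\<lambda>x. \<epsilon> * poly (pderiv Q) x) a b"
    unfolding PCS_def by blast+
  have vanish: "poly (abel_series (pprimitive a) A B $ n) b = 0"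
    if "has_center (poly A) (poly B) a b" "n \<ge> 2" for A B n
    using that by (simp add: has_center_iff_abel_series_vanish)
  have "fps_eval b (abel_variation.variation a (pderiv P) 0 0 (pderiv Q)) = 0"
  proof (rule abel_variation.fps_eval_variation_end[OF infinite_UNIV_char_0])
    fix e :: complex and n :: nat assume "n \<ge> 2"
    moreover have "(\<lambda>x. e * poly (pderiv Q) x) = poly (smult e (pderiv Q))" by auto
    ultimately show "poly (abel_series (pprimitive a) (pderiv P + smult e 0) (0 + smult e (pderiv Q)) $ n) b = 0"
      using center[of e] by (simp add: vanish)
  qed
  then have "contour_integral (linepath a b) (poly (P ^ i * pderiv Q)) = 0" for i
    using P by (intro moments_vanish_quadratic_perturbation) (auto simp: Pd_def)
  moreover have "fps_eval b (abel_variation.variation a 0 (pderiv P) (pderiv Q) 0) = 0"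
  proof (rule abel_variation.fps_eval_variation_end[where S = "- {0}"])
    show "infinite (- {0 :: complex})" by (simp add: infinite_UNIV_char_0)
    fix \<mu> :: complex and n :: nat assume "\<mu> \<in> - {0}" "n \<ge> 2"
    moreover have "has_center (poly (smult \<mu> (pderiv P))) (poly (pderiv Q)) a b"
      using \<open>\<mu> \<in> - {0}\<close> by (intro has_center_scale[OF center, of "csqrt (1 / \<mu>)"]) auto
    ultimately show "poly (abel_series (pprimitive a) (0 + smult \<mu> (pderiv P)) (pderiv Q + smult \<mu> 0) $ n) b = 0"
      by (simp add: vanish)
  qed
  then have "contour_integral (linepath a b) (poly (Q ^ i * pderiv P)) = 0" for i
    using Q by (intro moments_vanish_cubic_perturbation) (auto simp: Pd_def)
  moreover have "poly (F ^ i * G) = (\<lambda>x. poly F x ^ i * poly G x)" for F G :: "complex poly" and i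
    by auto
  ultimately show "(P, Q) \<in> MS d a b"
    using P Q by (simp add: MS_def)
qed

theorem proposition2p2:
  fixes a b :: complex and d :: nat
  assumes "a \<noteq> b" and "d \<ge> 1"
  shows "COS d a b \<subseteq> PCS d a b \<and> PCS d a b \<subseteq> MS d a b"
  using COS_subset_PCS PCS_subset_MS by blast

end
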